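(* Let $L$ be a finite-dimensional Lie algebra over a field $F$. 1. $L$ is primitive if and only if there exists a subalgebra $M$ of $L$ such that $L = M + A$ for every minimal ideal $A$ of $L$. 2. Let $L$ be primitive, let $U$ be a core-free maximal subalgebra of $L$ and let $A$ be a non-trivial ideal of $L$. Put $C = C_L(A)$. Then $C \cap U = 0$, and either $C = 0$ or $C$ is a minimal ideal of $L$. 3. If $L$ is primitive and $U$ is a core-free maximal subalgebra of $L$, then exactly one of the following holds: (a) $\mathrm{Soc}(L) = A$ is a self-centralising abelian minimal ideal of $L$ which is complemented by $U$, i.e. $L = U \dot{+} A$ (vector space direct sum); (b) $\mathrm{Soc}(L) = A$ is a non-abelian minimal ideal of $L$ which is supplemented by $U$, i.e. $L = U + A$, and in this case $C_L(A) = 0$; (c) $\mathrm{Soc}(L) = A \oplus B$, where $A$ and $B$ are the only two minimal ideals of $L$ and both are complemented by $U$, i.e. $L = A \dot{+} U = B \dot{+} U$; in this case $A = C_L(B)$, $B = C_L(A)$, and $A$, $B$ and $(A+B)\cap U$ are pairwise isomorphic non-abelian Lie algebras.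
   Context: All Lie algebras are finite-dimensional over a field $F$. For a subalgebra $U$ of $L$, the core $U_L$ is the largest ideal of $L$ contained in $U$; $U$ is core-free if $U_L = 0$. $L$ is called primitive if it has a core-free maximal subalgebra. $C_L(U) = \{x \in L : [x,U] = 0\}$. $\mathrm{Soc}(L)$ is the sum of all minimal ideals of $L$. An ideal $A$ is self-centralising if $C_L(A) = A$.
   Formalization: In part 1 the subalgebra M must also be core-free (so $M_L = 0$), and L is assumed nonzero throughout. Apart from conventions, each condition added here is assumed in the paper as well or is needed for the statement above to hold. *)

theory Defs
  imports Complex_Main
begin

text \<open>A Lie algebra L over a field F is modelled as the whole type 'v (carrier UNIV),
  with scalar multiplication sc :: 'f \<Rightarrow> 'v \<Rightarrow> 'v and Lie bracket br.\<close>

definition lie_algebra :: "('f::field \<Rightarrow> 'v::ab_group_add \<Rightarrow> 'v) \<Rightarrow> ('v \<Rightarrow> 'v \<Rightarrow> 'v) \<Rightarrow> bool" where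
  "lie_algebra sc br \<longleftrightarrow> vector_space sc \<and>
     (\<forall>x y z. br (x + y) z = br x z + br y z) \<and>
     (\<forall>x y z. br x (y + z) = br x y + br x z) \<and>
     (\<forall>c x y. br (sc c x) y = sc c (br x y)) \<and>
     (\<forall>c x y. br x (sc c y) = sc c (br x y)) \<and>
     (\<forall>x. br x x = 0) \<and>
     (\<forall>x y z. br x (br y z) + br y (br z x) + br z (br x y) = 0)"

definition fin_dim :: "('f::field \<Rightarrow> 'v::ab_group_add \<Rightarrow> 'v) \<Rightarrow> bool" where
  "fin_dim sc \<longleftrightarrow> (\<exists>B. finite B \<and> module.span sc B = UNIV)"

definition ssum :: "'v::ab_group_add set \<Rightarrow> 'v set \<Rightarrow> 'v set" where
  "ssum X Y = {x + y | x y. x \<in> X \<and> y \<in> Y}"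

definition subalgebra :: "('f::field \<Rightarrow> 'v::ab_group_add \<Rightarrow> 'v) \<Rightarrow> ('v \<Rightarrow> 'v \<Rightarrow> 'v) \<Rightarrow> 'v set \<Rightarrow> bool" where
  "subalgebra sc br U \<longleftrightarrow> module.subspace sc U \<and> (\<forall>x\<in>U. \<forall>y\<in>U. br x y \<in> U)"

definition lie_ideal :: "('f::field \<Rightarrow> 'v::ab_group_add \<Rightarrow> 'v) \<Rightarrow> ('v \<Rightarrow> 'v \<Rightarrow> 'v) \<Rightarrow> 'v set \<Rightarrow> bool" where
  "lie_ideal sc br I \<longleftrightarrow> module.subspace sc I \<and> (\<forall>x. \<forall>y\<in>I. br x y \<in> I)"

definition maximal_subalgebra :: "('f::field \<Rightarrow> 'v::ab_group_add \<Rightarrow> 'v) \<Rightarrow> ('v \<Rightarrow> 'v \<Rightarrow> 'v) \<Rightarrow> 'v set \<Rightarrow> bool" where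
  "maximal_subalgebra sc br M \<longleftrightarrow> subalgebra sc br M \<and> M \<noteq> UNIV \<and>
     (\<forall>K. subalgebra sc br K \<and> M \<subseteq> K \<longrightarrow> K = M \<or> K = UNIV)"

definition minimal_ideal :: "('f::field \<Rightarrow> 'v::ab_group_add \<Rightarrow> 'v) \<Rightarrow> ('v \<Rightarrow> 'v \<Rightarrow> 'v) \<Rightarrow> 'v set \<Rightarrow> bool" where
  "minimal_ideal sc br A \<longleftrightarrow> lie_ideal sc br A \<and> A \<noteq> {0} \<and>
     (\<forall>B. lie_ideal sc br B \<and> B \<subseteq> A \<longrightarrow> B = {0} \<or> B = A)"

definition core :: "('f::field \<Rightarrow> 'v::ab_group_add \<Rightarrow> 'v) \<Rightarrow> ('v \<Rightarrow> 'v \<Rightarrow> 'v) \<Rightarrow> 'v set \<Rightarrow> 'v set" where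
  "core sc br U = module.span sc (\<Union>{I. lie_ideal sc br I \<and> I \<subseteq> U})"

definition core_free :: "('f::field \<Rightarrow> 'v::ab_group_add \<Rightarrow> 'v) \<Rightarrow> ('v \<Rightarrow> 'v \<Rightarrow> 'v) \<Rightarrow> 'v set \<Rightarrow> bool" where
  "core_free sc br U \<longleftrightarrow> core sc br U = {0}"

definition primitive :: "('f::field \<Rightarrow> 'v::ab_group_add \<Rightarrow> 'v) \<Rightarrow> ('v \<Rightarrow> 'v \<Rightarrow> 'v) \<Rightarrow> bool" where
  "primitive sc br \<longleftrightarrow> (\<exists>U. maximal_subalgebra sc br U \<and> core_free sc br U)"

definition centraliser :: "('v::zero \<Rightarrow> 'v \<Rightarrow> 'v) \<Rightarrow> 'v set \<Rightarrow> 'v set" where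
  "centraliser br U = {x. \<forall>u\<in>U. br x u = 0}"

definition socle :: "('f::field \<Rightarrow> 'v::ab_group_add \<Rightarrow> 'v) \<Rightarrow> ('v \<Rightarrow> 'v \<Rightarrow> 'v) \<Rightarrow> 'v set" where
  "socle sc br = module.span sc (\<Union>{A. minimal_ideal sc br A})"

definition abelian_set :: "('v::zero \<Rightarrow> 'v \<Rightarrow> 'v) \<Rightarrow> 'v set \<Rightarrow> bool" where
  "abelian_set br X \<longleftrightarrow> (\<forall>x\<in>X. \<forall>y\<in>X. br x y = 0)"

definition lie_iso_sets :: "('f::field \<Rightarrow> 'v::ab_group_add \<Rightarrow> 'v) \<Rightarrow> ('v \<Rightarrow> 'v \<Rightarrow> 'v) \<Rightarrow> 'v set \<Rightarrow> 'v set \<Rightarrow> bool" where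
  "lie_iso_sets sc br X Y \<longleftrightarrow> (\<exists>f. bij_betw f X Y \<and>
     (\<forall>x\<in>X. \<forall>y\<in>X. f (x + y) = f x + f y \<and> f (br x y) = br (f x) (f y)) \<and>
     (\<forall>c. \<forall>x\<in>X. f (sc c x) = sc c (f x)))"

end

theory Submission
  imports Defs
begin

text \<open>
  Let \<open>U\<close> be a core-free maximal subalgebra. For every non-zero ideal \<open>A\<close>, \<open>U + A\<close> is a
  subalgebra that is not \<open>U\<close>, hence \<open>U + A = L\<close>. Since \<open>A\<close> centralises \<open>C = C\<^sub>L(A)\<close>, the
  subspace \<open>C \<inter> U\<close> is normalised by \<open>U + A = L\<close>, so it is an ideal inside \<open>U\<close> and vanishes.
  The modular law then shows that every non-zero ideal \<open>B \<subseteq> C\<close> (which satisfies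
  \<open>U + B = L\<close>) contains \<open>C\<close>, so \<open>C\<close> is zero or minimal. Two distinct minimal ideals
  commute, so all minimal ideals other than a fixed one \<open>A\<close> lie in \<open>C\<^sub>L(A)\<close>; this gives the
  three cases \<open>C\<^sub>L(A) = A\<close> (\<open>A\<close> abelian), \<open>C\<^sub>L(A) = 0\<close>, and \<open>C\<^sub>L(A) = B\<close> a second minimal
  ideal with \<open>C\<^sub>L(B) = A\<close>. In the last case the projections of \<open>(A + B) \<inter> U\<close> onto \<open>A\<close> along
  \<open>B\<close> and onto \<open>B\<close> along \<open>A\<close> are isomorphisms, because \<open>A\<close> and \<open>B\<close> are complemented by \<open>U\<close>
  and \<open>[A, B] = 0\<close>.
\<close>

lemma ssum_commute: "ssum A B = ssum B A"
  unfolding ssum_def using add.commute by blast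

lemma ssum_mem: "x \<in> A \<Longrightarrow> y \<in> B \<Longrightarrow> x + y \<in> ssum A B"
  unfolding ssum_def by blast

lemma ssumE: "z \<in> ssum A B \<Longrightarrow> (\<And>x y. z = x + y \<Longrightarrow> x \<in> A \<Longrightarrow> y \<in> B \<Longrightarrow> P) \<Longrightarrow> P"
  unfolding ssum_def by blast

lemma ssum_UNIV_E:
  "ssum A B = UNIV \<Longrightarrow> (\<And>x y. z = x + y \<Longrightarrow> x \<in> A \<Longrightarrow> y \<in> B \<Longrightarrow> P) \<Longrightarrow> P"
  using ssumE[of z A B P] by simp

locale finite_dimensional_lie_algebra =
  fixes sc :: "'f::field \<Rightarrow> 'v::ab_group_add \<Rightarrow> 'v"
    and br :: "'v \<Rightarrow> 'v \<Rightarrow> 'v"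
  assumes lie: "lie_algebra sc br"
    and fin_dim: "fin_dim sc"
begin

sublocale vector_space sc
  using lie by (simp add: lie_algebra_def)

lemma bracket_add_left: "br (x + y) z = br x z + br y z"
  using lie by (simp add: lie_algebra_def)

lemma bracket_add_right: "br x (y + z) = br x y + br x z"
  using lie by (simp add: lie_algebra_def)

lemma bracket_scale_left: "br (sc c x) y = sc c (br x y)"
  using lie by (simp add: lie_algebra_def)

lemma bracket_self: "br x x = 0"
  using lie by (simp add: lie_algebra_def)

lemma jacobi: "br x (br y z) + br y (br z x) + br z (br x y) = 0"
  using lie by (simp add: lie_algebra_def)

lemma bracket_zero_left [simp]: "br 0 y = 0"
  using bracket_add_left[of 0 0 y] by simp

lemma bracket_zero_right [simp]: "br y 0 = 0"
  using bracket_add_right[of y 0 0] by simp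

lemma bracket_antisym: "br x y = - br y x"
proof -
  have "br (x + y) (x + y) = br x x + br y x + (br x y + br y y)"
    by (simp only: bracket_add_left bracket_add_right)
  then have "br x y + br y x = 0"
    by (simp add: bracket_self add.commute)
  then show ?thesis
    by (simp add: eq_neg_iff_add_eq_0)
qed

lemma bracket_eq_0_commute: "br x y = 0 \<longleftrightarrow> br y x = 0"
  by (metis bracket_antisym neg_equal_0_iff_equal)

definition basis :: "'v set" where
  "basis = (SOME B. independent B \<and> span B = UNIV)"

lemma basis_props: "independent basis" "span basis = UNIV" "finite basis"
proof -
  obtain B where "independent B" "UNIV \<subseteq> span B"
    using maximal_independent_subset[of UNIV] by blast
  then have "\<exists>B. independent B \<and> span B = UNIV"
    by auto
  then have "independent basis \<and> span basis = UNIV"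
    unfolding basis_def by (rule someI_ex)
  then show "independent basis" "span basis = UNIV"
    by auto
  obtain W where "finite W" "span W = UNIV"
    using fin_dim by (auto simp: fin_dim_def)
  then show "finite basis"
    using independent_span_bound[of W basis] \<open>independent basis\<close> by auto
qed

sublocale fd: finite_dimensional_vector_space sc basis
  by unfold_locales (auto simp: basis_props)

lemma subalgebra_subspace: "subalgebra sc br U \<Longrightarrow> subspace U"
  unfolding subalgebra_def by blast

lemma subalgebra_bracket: "subalgebra sc br U \<Longrightarrow> x \<in> U \<Longrightarrow> y \<in> U \<Longrightarrow> br x y \<in> U"
  unfolding subalgebra_def by blast

lemma subalgebra_Int: "subalgebra sc br X \<Longrightarrow> subalgebra sc br Y \<Longrightarrow> subalgebra sc br (X \<inter> Y)"
  unfolding subalgebra_def by (auto intro: subspace_inter)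

lemma lie_ideal_subspace: "lie_ideal sc br I \<Longrightarrow> subspace I"
  unfolding lie_ideal_def by blast

lemma lie_ideal_subalgebra: "lie_ideal sc br I \<Longrightarrow> subalgebra sc br I"
  by (simp add: lie_ideal_def subalgebra_def)

lemma lie_ideal_bracket_right: "lie_ideal sc br I \<Longrightarrow> y \<in> I \<Longrightarrow> br x y \<in> I"
  unfolding lie_ideal_def by blast

lemma lie_ideal_bracket_left: "lie_ideal sc br I \<Longrightarrow> y \<in> I \<Longrightarrow> br y x \<in> I"
  unfolding lie_ideal_def by (metis bracket_antisym subspace_neg)

lemma lie_ideal_zero: "lie_ideal sc br I \<Longrightarrow> 0 \<in> I"
  using lie_ideal_subspace subspace_0 by blast

lemma lie_ideal_UNIV: "lie_ideal sc br UNIV"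
  by (simp add: lie_ideal_def)

lemma lie_ideal_Int: "lie_ideal sc br A \<Longrightarrow> lie_ideal sc br B \<Longrightarrow> lie_ideal sc br (A \<inter> B)"
  unfolding lie_ideal_def by (auto intro: subspace_inter)

lemma centraliser_lie_ideal:
  assumes A: "lie_ideal sc br A"
  shows "lie_ideal sc br (centraliser br A)"
  unfolding lie_ideal_def
proof (intro conjI allI ballI)
  show "subspace (centraliser br A)"
    by (rule subspaceI) (auto simp: centraliser_def bracket_add_left bracket_scale_left)
  fix x c
  assume c: "c \<in> centraliser br A"
  show "br x c \<in> centraliser br A"
    unfolding centraliser_def
  proof (intro CollectI ballI)
    fix a
    assume a: "a \<in> A"
    have "br c a = 0" "br c (br a x) = 0"
      using c a lie_ideal_bracket_left[OF A a] by (auto simp: centraliser_def)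
    then have "br a (br x c) = 0"
      using jacobi[of x c a] by simp
    then show "br (br x c) a = 0"
      using bracket_eq_0_commute by blast
  qed
qed

lemma subset_centraliser_iff_abelian: "A \<subseteq> centraliser br A \<longleftrightarrow> abelian_set br A"
  unfolding centraliser_def abelian_set_def by blast

lemma ssum_subspace:
  assumes A: "subspace A" and B: "subspace B"
  shows "subspace (ssum A B)"
proof (rule subspaceI)
  show "0 \<in> ssum A B"
    using ssum_mem[OF subspace_0[OF A] subspace_0[OF B]] by simp
next
  fix x y
  assume "x \<in> ssum A B" "y \<in> ssum A B"
  then obtain a b a' b' where "x = a + b" "a \<in> A" "b \<in> B" "y = a' + b'" "a' \<in> A" "b' \<in> B"
    by (metis ssumE)
  moreover have "x + y = (a + a') + (b + b')"
    using calculation by (simp add: algebra_simps)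
  ultimately show "x + y \<in> ssum A B"
    using A B by (metis ssum_mem subspace_add)
next
  fix c x
  assume "x \<in> ssum A B"
  then obtain a b where "x = a + b" "a \<in> A" "b \<in> B"
    by (metis ssumE)
  then show "sc c x \<in> ssum A B"
    using A B by (metis ssum_mem subspace_scale scale_right_distrib)
qed

lemma ssum_subset: "subspace S \<Longrightarrow> A \<subseteq> S \<Longrightarrow> B \<subseteq> S \<Longrightarrow> ssum A B \<subseteq> S"
  by (auto elim!: ssumE intro: subspace_add)

lemma ssum_upper_left: "subspace B \<Longrightarrow> A \<subseteq> ssum A B"
  using ssum_mem[of _ A 0 B] subspace_0 by fastforce

lemma ssum_upper_right: "subspace A \<Longrightarrow> B \<subseteq> ssum A B"
  using ssum_mem[of 0 A _ B] subspace_0 by fastforce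

lemma ssum_subalgebra:
  assumes U: "subalgebra sc br U" and A: "lie_ideal sc br A"
  shows "subalgebra sc br (ssum U A)"
  unfolding subalgebra_def
proof (intro conjI ballI)
  show "subspace (ssum U A)"
    using U A by (simp add: ssum_subspace subalgebra_subspace lie_ideal_subspace)
  fix x y
  assume "x \<in> ssum U A" "y \<in> ssum U A"
  then obtain u a u' a' where x: "x = u + a" "u \<in> U" "a \<in> A" and y: "y = u' + a'" "u' \<in> U" "a' \<in> A"
    by (metis ssumE)
  have "br x y = br u u' + (br u a' + br a u' + br a a')"
    using x y by (simp add: bracket_add_left bracket_add_right algebra_simps)
  moreover have "br u u' \<in> U"
    using U x y by (simp add: subalgebra_bracket)
  moreover have "br u a' \<in> A" "br a u' \<in> A" "br a a' \<in> A"
    using A x y lie_ideal_bracket_left lie_ideal_bracket_right by blast+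
  then have "br u a' + br a u' + br a a' \<in> A"
    using lie_ideal_subspace[OF A] subspace_add by blast
  ultimately show "br x y \<in> ssum U A"
    by (simp add: ssum_mem)
qed

text \<open>Dedekind's modular law: \<open>C = C \<inter> (U + K) = (C \<inter> U) + K = K\<close>.\<close>
lemma subset_by_modular_law:
  assumes "ssum U K = UNIV" "K \<subseteq> C" "C \<inter> U = {0}" "subspace C"
  shows "C \<subseteq> K"
proof
  fix c
  assume c: "c \<in> C"
  obtain u k where uk: "c = u + k" "u \<in> U" "k \<in> K"
    using assms(1) by (rule ssum_UNIV_E)
  then have "u = c - k"
    by (simp add: algebra_simps)
  then have "u \<in> C"
    using c uk assms(2,4) subspace_diff by blast
  then have "u = 0"
    using uk assms(3) by blast
  then show "c \<in> K"
    using uk by simp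
qed

lemma core_free_lie_ideal_eq_0:
  assumes "core_free sc br U" "lie_ideal sc br I" "I \<subseteq> U"
  shows "I = {0}"
proof -
  have "I \<subseteq> \<Union>{I. lie_ideal sc br I \<and> I \<subseteq> U}"
    using assms(2,3) by blast
  then have "I \<subseteq> core sc br U"
    unfolding core_def using span_superset by blast
  moreover have "0 \<in> I"
    using assms(2) by (rule lie_ideal_zero)
  ultimately show ?thesis
    using assms(1) unfolding core_free_def by blast
qed

lemma not_core_free_obtains_lie_ideal:
  assumes "\<not> core_free sc br U"
  obtains I where "lie_ideal sc br I" "I \<subseteq> U" "I \<noteq> {0}"
proof -
  have "\<not> \<Union>{I. lie_ideal sc br I \<and> I \<subseteq> U} \<subseteq> {0}"
  proof
    assume "\<Union>{I. lie_ideal sc br I \<and> I \<subseteq> U} \<subseteq> {0}"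
    then have "core sc br U \<subseteq> {0}"
      unfolding core_def by (rule span_minimal) simp
    then have "core sc br U = {0}"
      using span_zero unfolding core_def by blast
    then show False
      using assms by (simp add: core_free_def)
  qed
  then show ?thesis
    using that by blast
qed

subsection \<open>Minimal ideals and maximal subalgebras\<close>

lemma minimal_ideal_lie_ideal: "minimal_ideal sc br A \<Longrightarrow> lie_ideal sc br A"
  by (simp add: minimal_ideal_def)

lemma minimal_ideal_nonzero: "minimal_ideal sc br A \<Longrightarrow> A \<noteq> {0}"
  by (simp add: minimal_ideal_def)

lemma minimal_idealD:
  "minimal_ideal sc br A \<Longrightarrow> lie_ideal sc br I \<Longrightarrow> I \<subseteq> A \<Longrightarrow> I \<noteq> {0} \<Longrightarrow> I = A"
  unfolding minimal_ideal_def by blast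

lemma maximal_subalgebra_subalgebra: "maximal_subalgebra sc br U \<Longrightarrow> subalgebra sc br U"
  by (simp add: maximal_subalgebra_def)

lemma minimal_ideal_exists:
  assumes I: "lie_ideal sc br I" "I \<noteq> {0}"
  obtains A where "minimal_ideal sc br A" "A \<subseteq> I"
proof -
  define P where "P J \<longleftrightarrow> lie_ideal sc br J \<and> J \<noteq> {0} \<and> J \<subseteq> I" for J
  obtain J where J: "P J" and least: "\<And>K. P K \<Longrightarrow> dim J \<le> dim K"
    using ex_has_least_nat[of P I dim] I by (auto simp: P_def)
  have "minimal_ideal sc br J"
    unfolding minimal_ideal_def
  proof (intro conjI allI impI)
    show "lie_ideal sc br J" "J \<noteq> {0}"
      using J by (auto simp: P_def)
    fix B
    assume B: "lie_ideal sc br B \<and> B \<subseteq> J"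
    show "B = {0} \<or> B = J"
    proof (cases "B = {0}")
      case False
      then have "P B"
        using B J by (auto simp: P_def)
      then have "dim J \<le> dim B"
        by (rule least)
      then show ?thesis
        using fd.subspace_dim_equal[of B J] B J lie_ideal_subspace by (auto simp: P_def)
    qed simp
  qed
  then show ?thesis
    using J that by (auto simp: P_def)
qed

lemma maximal_subalgebra_exists:
  assumes M: "subalgebra sc br M" "M \<noteq> UNIV"
  obtains U where "maximal_subalgebra sc br U" "M \<subseteq> U"
proof -
  define P where "P K \<longleftrightarrow> subalgebra sc br K \<and> K \<noteq> UNIV \<and> M \<subseteq> K" for K
  obtain U where U: "P U" and least: "\<And>K. P K \<Longrightarrow> fd.dimension - dim U \<le> fd.dimension - dim K"
    using ex_has_least_nat[of P M "\<lambda>K. fd.dimension - dim K"] M by (auto simp: P_def)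
  have "maximal_subalgebra sc br U"
    unfolding maximal_subalgebra_def
  proof (intro conjI allI impI)
    show "subalgebra sc br U" "U \<noteq> UNIV"
      using U by (auto simp: P_def)
    fix K
    assume K: "subalgebra sc br K \<and> U \<subseteq> K"
    show "K = U \<or> K = UNIV"
    proof (rule disjCI)
      assume "K \<noteq> UNIV"
      then have "P K"
        using K U by (auto simp: P_def)
      then have "fd.dimension - dim U \<le> fd.dimension - dim K"
        by (rule least)
      moreover have "dim K \<le> fd.dimension" "dim U \<le> dim K"
        using fd.dim_subset_UNIV fd.dim_subset K by auto
      ultimately have "dim K \<le> dim U"
        by linarith
      then show "K = U"
        using fd.subspace_dim_equal[of U K] K U subalgebra_subspace by (auto simp: P_def)
    qed
  qed
  then show ?thesis
    using U that by (auto simp: P_def)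
qed

lemma minimal_ideals_disjoint:
  assumes A: "minimal_ideal sc br A" and B: "minimal_ideal sc br B" and "A \<noteq> B"
  shows "A \<inter> B = {0}"
proof (rule ccontr)
  assume "A \<inter> B \<noteq> {0}"
  moreover have "lie_ideal sc br (A \<inter> B)"
    using lie_ideal_Int minimal_ideal_lie_ideal A B by blast
  ultimately have "A \<inter> B = A" "A \<inter> B = B"
    using minimal_idealD[OF A] minimal_idealD[OF B] by blast+
  with \<open>A \<noteq> B\<close> show False
    by simp
qed

lemma minimal_ideal_subset_centraliser:
  assumes A: "minimal_ideal sc br A" and B: "minimal_ideal sc br B" and "A \<noteq> B"
  shows "B \<subseteq> centraliser br A"
proof -
  have "br b a \<in> A \<inter> B" if "a \<in> A" "b \<in> B" for a b
    using lie_ideal_bracket_right[OF minimal_ideal_lie_ideal[OF A] \<open>a \<in> A\<close>]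
      lie_ideal_bracket_left[OF minimal_ideal_lie_ideal[OF B] \<open>b \<in> B\<close>] by blast
  then show ?thesis
    using minimal_ideals_disjoint[OF A B \<open>A \<noteq> B\<close>] unfolding centraliser_def by blast
qed

lemma socle_eq_single:
  assumes A: "minimal_ideal sc br A" and all: "\<And>I. minimal_ideal sc br I \<Longrightarrow> I = A"
  shows "socle sc br = A"
proof -
  have "\<Union>{A. minimal_ideal sc br A} = A"
    using A all by blast
  then show ?thesis
    unfolding socle_def using lie_ideal_subspace[OF minimal_ideal_lie_ideal[OF A]] by simp
qed

lemma socle_eq_pair:
  assumes A: "minimal_ideal sc br A" and B: "minimal_ideal sc br B"
    and all: "\<And>I. minimal_ideal sc br I \<Longrightarrow> I = A \<or> I = B"
  shows "socle sc br = ssum A B"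
proof -
  have "\<Union>{A. minimal_ideal sc br A} = A \<union> B"
    using A B all by blast
  moreover have "span A = A" "span B = B"
    using A B minimal_ideal_lie_ideal lie_ideal_subspace by auto
  ultimately show ?thesis
    unfolding socle_def ssum_def using span_Un[of A B] by (simp only:)
qed

lemma socle_minimal_not_pair:
  assumes S: "minimal_ideal sc br (socle sc br)"
    and A: "minimal_ideal sc br A" and B: "minimal_ideal sc br B" and "A \<noteq> B"
  shows "socle sc br \<noteq> ssum A B"
proof
  assume AB: "socle sc br = ssum A B"
  have "subspace A" "subspace B"
    using A B minimal_ideal_lie_ideal lie_ideal_subspace by blast+
  then have "A \<subseteq> socle sc br" "B \<subseteq> socle sc br"
    using ssum_upper_left[of B A] ssum_upper_right[of A B] AB by auto
  then have "A = socle sc br" "B = socle sc br"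
    using minimal_idealD[OF S minimal_ideal_lie_ideal[OF A] _ minimal_ideal_nonzero[OF A]]
      minimal_idealD[OF S minimal_ideal_lie_ideal[OF B] _ minimal_ideal_nonzero[OF B]] by blast+
  with \<open>A \<noteq> B\<close> show False
    by simp
qed

subsection \<open>Core-free maximal subalgebras\<close>

lemma ssum_core_free_maximal_eq_UNIV:
  assumes U: "maximal_subalgebra sc br U" and cf: "core_free sc br U"
    and A: "lie_ideal sc br A" "A \<noteq> {0}"
  shows "ssum U A = UNIV"
proof -
  have Us: "subalgebra sc br U"
    using U by (rule maximal_subalgebra_subalgebra)
  have "U \<subseteq> ssum U A"
    using ssum_upper_left lie_ideal_subspace[OF A(1)] by blast
  then have "ssum U A = U \<or> ssum U A = UNIV"
    using U ssum_subalgebra[OF Us A(1)] by (simp add: maximal_subalgebra_def)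
  moreover have "\<not> A \<subseteq> U"
    using core_free_lie_ideal_eq_0[OF cf A(1)] A(2) by blast
  then have "ssum U A \<noteq> U"
    using ssum_upper_right[OF subalgebra_subspace[OF Us]] by blast
  ultimately show ?thesis
    by blast
qed

lemma centraliser_Int_core_free_maximal:
  assumes U: "maximal_subalgebra sc br U" and cf: "core_free sc br U"
    and A: "lie_ideal sc br A" "A \<noteq> {0}"
  shows "centraliser br A \<inter> U = {0}"
proof -
  define C where "C = centraliser br A"
  have C: "lie_ideal sc br C"
    unfolding C_def by (rule centraliser_lie_ideal[OF A(1)])
  have Us: "subalgebra sc br U"
    using U by (rule maximal_subalgebra_subalgebra)
  have "lie_ideal sc br (C \<inter> U)"
    unfolding lie_ideal_def
  proof (intro conjI allI ballI)
    show "subspace (C \<inter> U)"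
      using lie_ideal_subspace[OF C] subalgebra_subspace[OF Us] by (rule subspace_inter)
    fix x y
    assume y: "y \<in> C \<inter> U"
    obtain u a where ua: "x = u + a" "u \<in> U" "a \<in> A"
      using ssum_core_free_maximal_eq_UNIV[OF U cf A] by (rule ssum_UNIV_E)
    have "br a y = 0"
      using y ua bracket_eq_0_commute unfolding C_def centraliser_def by blast
    then have "br x y = br u y"
      using ua by (simp add: bracket_add_left)
    moreover have "br u y \<in> C" "br u y \<in> U"
      using lie_ideal_bracket_right[OF C] subalgebra_bracket[OF Us] y ua by auto
    ultimately show "br x y \<in> C \<inter> U"
      by simp
  qed
  then show ?thesis
    using core_free_lie_ideal_eq_0[OF cf] unfolding C_def by blast
qed

lemma centraliser_zero_or_minimal:
  assumes U: "maximal_subalgebra sc br U" and cf: "core_free sc br U"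
    and A: "lie_ideal sc br A" "A \<noteq> {0}"
  shows "centraliser br A = {0} \<or> minimal_ideal sc br (centraliser br A)"
proof (cases "centraliser br A = {0}")
  let ?C = "centraliser br A"
  case False
  have "minimal_ideal sc br ?C"
    unfolding minimal_ideal_def
  proof (intro conjI allI impI centraliser_lie_ideal[OF A(1)] False)
    fix B
    assume B: "lie_ideal sc br B \<and> B \<subseteq> ?C"
    show "B = {0} \<or> B = ?C"
    proof (cases "B = {0}")
      case False
      then have "?C \<subseteq> B"
        using subset_by_modular_law ssum_core_free_maximal_eq_UNIV[OF U cf] B
          centraliser_Int_core_free_maximal[OF U cf A] lie_ideal_subspace[OF centraliser_lie_ideal[OF A(1)]]
        by blast
      then show ?thesis
        using B by blast
    qed simp
  qed
  then show ?thesis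
    by simp
qed simp

lemma centraliser_nonzero_minimal:
  assumes U: "maximal_subalgebra sc br U" and cf: "core_free sc br U"
    and A: "lie_ideal sc br A" "A \<noteq> {0}" and "centraliser br A \<noteq> {0}"
  shows "minimal_ideal sc br (centraliser br A)"
  using centraliser_zero_or_minimal[OF U cf A] assms(5) by blast

subsection \<open>Isomorphisms of subalgebras\<close>

definition projection :: "'v set \<Rightarrow> 'v set \<Rightarrow> 'v \<Rightarrow> 'v" where
  "projection A B w = (THE a. a \<in> A \<and> w - a \<in> B)"

lemma projection_eq:
  assumes "subspace A" "subspace B" "A \<inter> B = {0}" "a \<in> A" "b \<in> B"
  shows "projection A B (a + b) = a"
  unfolding projection_def
proof (rule the_equality)
  show "a \<in> A \<and> a + b - a \<in> B"
    using assms by simp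
  fix a'
  assume a': "a' \<in> A \<and> a + b - a' \<in> B"
  have "a - a' \<in> A" "(a + b - a') - b \<in> B"
    using assms a' subspace_diff by blast+
  moreover have "(a + b - a') - b = a - a'"
    by (simp add: algebra_simps)
  ultimately have "a - a' \<in> A \<inter> B"
    by simp
  then have "a - a' = 0"
    using assms(3) by blast
  then show "a' = a"
    by simp
qed

lemma lie_iso_sets_projection:
  assumes A: "lie_ideal sc br A" and B: "lie_ideal sc br B" and AB: "A \<inter> B = {0}"
    and BU: "B \<inter> U = {0}" and SBU: "ssum B U = UNIV" and U: "subspace U"
    and comm: "\<And>a b. a \<in> A \<Longrightarrow> b \<in> B \<Longrightarrow> br a b = 0"
  shows "lie_iso_sets sc br (ssum A B \<inter> U) A"
proof -
  have As: "subspace A" and Bs: "subspace B"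
    using A B lie_ideal_subspace by auto
  let ?W = "ssum A B \<inter> U"
  let ?p = "projection A B"
  have p_eq: "?p (a + b) = a" if "a \<in> A" "b \<in> B" for a b
    using projection_eq[OF As Bs AB that] .
  have decomp: "\<exists>a b. w = a + b \<and> a \<in> A \<and> b \<in> B \<and> ?p w = a" if w: "w \<in> ?W" for w
  proof -
    obtain a b where "w = a + b" "a \<in> A" "b \<in> B"
      using w by (auto elim: ssumE)
    with p_eq show ?thesis
      by blast
  qed
  have "inj_on ?p ?W"
  proof (rule inj_onI)
    fix w w'
    assume w: "w \<in> ?W" and w': "w' \<in> ?W" and eq: "?p w = ?p w'"
    obtain a b a' b' where "w = a + b" "b \<in> B" "?p w = a" "w' = a' + b'" "b' \<in> B" "?p w' = a'"
      using decomp[OF w] decomp[OF w'] by blast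
    then have "w - w' = b - b'" "b - b' \<in> B"
      using eq Bs subspace_diff by auto
    then have "w - w' \<in> B"
      by simp
    moreover have "w - w' \<in> U"
      using w w' U subspace_diff by blast
    ultimately have "w - w' = 0"
      using BU by blast
    then show "w = w'"
      by simp
  qed
  moreover have "?p ` ?W = A"
  proof
    show "?p ` ?W \<subseteq> A"
      using decomp by force
    show "A \<subseteq> ?p ` ?W"
    proof
      fix a
      assume a: "a \<in> A"
      obtain b u where bu: "a = b + u" "b \<in> B" "u \<in> U"
        using SBU by (rule ssum_UNIV_E)
      have "u = a + - b"
        using bu by (simp add: algebra_simps)
      moreover have "- b \<in> B"
        using bu Bs subspace_neg by blast
      moreover note ssum_mem[OF a \<open>- b \<in> B\<close>] p_eq[OF a \<open>- b \<in> B\<close>]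
      ultimately have "u \<in> ?W" "?p u = a"
        using bu(3) by simp_all
      then show "a \<in> ?p ` ?W"
        by force
    qed
  qed
  moreover have "?p (x + y) = ?p x + ?p y \<and> ?p (br x y) = br (?p x) (?p y)"
    if xy: "x \<in> ?W" "y \<in> ?W" for x y
  proof -
    obtain a b a' b' where ab: "x = a + b" "a \<in> A" "b \<in> B" "?p x = a"
      and ab': "y = a' + b'" "a' \<in> A" "b' \<in> B" "?p y = a'"
      using decomp xy by blast
    have "x + y = (a + a') + (b + b')"
      using ab ab' by (simp add: algebra_simps)
    moreover have "br a b' = 0" "br b a' = 0"
      using ab ab' comm bracket_eq_0_commute by blast+
    then have "br x y = br a a' + br b b'"
      using ab ab' by (simp add: bracket_add_left bracket_add_right)
    moreover have "a + a' \<in> A" "b + b' \<in> B" "br a a' \<in> A" "br b b' \<in> B"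
      using ab ab' As Bs A B subspace_add lie_ideal_bracket_right by blast+
    ultimately show ?thesis
      using p_eq ab(4) ab'(4) by simp
  qed
  moreover have "?p (sc c x) = sc c (?p x)" if x: "x \<in> ?W" for c x
  proof -
    obtain a b where ab: "x = a + b" "a \<in> A" "b \<in> B" "?p x = a"
      using decomp x by blast
    then have "sc c x = sc c a + sc c b" "sc c a \<in> A" "sc c b \<in> B"
      using As Bs subspace_scale by (auto simp: scale_right_distrib)
    then show ?thesis
      using p_eq ab(4) by simp
  qed
  ultimately show ?thesis
    unfolding lie_iso_sets_def bij_betw_def by blast
qed

lemma lie_iso_sets_sym:
  assumes X: "subalgebra sc br X" and iso: "lie_iso_sets sc br X Y"
  shows "lie_iso_sets sc br Y X"
proof -
  obtain f where bij: "bij_betw f X Y"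
    and hom: "\<And>x y. x \<in> X \<Longrightarrow> y \<in> X \<Longrightarrow> f (x + y) = f x + f y \<and> f (br x y) = br (f x) (f y)"
    and scl: "\<And>c x. x \<in> X \<Longrightarrow> f (sc c x) = sc c (f x)"
    using iso unfolding lie_iso_sets_def by blast
  define g where "g = the_inv_into X f"
  have g: "bij_betw g Y X"
    unfolding g_def by (rule bij_betw_the_inv_into[OF bij])
  have gf: "x \<in> X \<Longrightarrow> g (f x) = x" for x
    unfolding g_def using bij by (simp add: bij_betw_def the_inv_into_f_f)
  have fg: "y \<in> Y \<Longrightarrow> f (g y) = y" and gY: "y \<in> Y \<Longrightarrow> g y \<in> X" for y
    using g bij unfolding g_def by (auto simp: bij_betw_def f_the_inv_into_f the_inv_into_into)
  have closed: "g x + g y \<in> X" "br (g x) (g y) \<in> X" "sc c (g x) \<in> X"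
    if "x \<in> Y" "y \<in> Y" for x y c
    using that gY X subalgebra_subspace subalgebra_bracket subspace_add subspace_scale by metis+
  have "g (x + y) = g x + g y \<and> g (br x y) = br (g x) (g y)" if "x \<in> Y" "y \<in> Y" for x y
    using hom[OF gY gY] fg gf closed that by metis
  moreover have "g (sc c x) = sc c (g x)" if "x \<in> Y" for c x
    using scl[OF gY] fg gf closed that by metis
  ultimately show ?thesis
    unfolding lie_iso_sets_def using g by blast
qed

lemma lie_iso_sets_trans:
  assumes "lie_iso_sets sc br X Y" "lie_iso_sets sc br Y Z"
  shows "lie_iso_sets sc br X Z"
proof -
  obtain f where f: "bij_betw f X Y"
    "\<And>x y. x \<in> X \<Longrightarrow> y \<in> X \<Longrightarrow> f (x + y) = f x + f y \<and> f (br x y) = br (f x) (f y)"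
    "\<And>c x. x \<in> X \<Longrightarrow> f (sc c x) = sc c (f x)"
    using assms(1) unfolding lie_iso_sets_def by blast
  obtain g where g: "bij_betw g Y Z"
    "\<And>x y. x \<in> Y \<Longrightarrow> y \<in> Y \<Longrightarrow> g (x + y) = g x + g y \<and> g (br x y) = br (g x) (g y)"
    "\<And>c x. x \<in> Y \<Longrightarrow> g (sc c x) = sc c (g x)"
    using assms(2) unfolding lie_iso_sets_def by blast
  have "x \<in> X \<Longrightarrow> f x \<in> Y" for x
    using f(1) bij_betwE by blast
  then show ?thesis
    unfolding lie_iso_sets_def using f g bij_betw_trans[OF f(1) g(1)]
    by (intro exI[of _ "g \<circ> f"]) simp
qed

lemma lie_iso_sets_abelian:
  assumes "lie_iso_sets sc br X Y" "abelian_set br X"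
  shows "abelian_set br Y"
proof -
  obtain f where f: "bij_betw f X Y"
    "\<And>x y. x \<in> X \<Longrightarrow> y \<in> X \<Longrightarrow> f (br x y) = br (f x) (f y)"
    using assms(1) unfolding lie_iso_sets_def by blast
  have "br (f x) (f x') = 0" if "x \<in> X" "x' \<in> X" for x x'
    using f(2)[OF that] f(2)[of x x] assms(2) that unfolding abelian_set_def by (simp add: bracket_self)
  then show ?thesis
    unfolding abelian_set_def using f(1) by (metis bij_betw_imp_surj_on imageE)
qed

subsection \<open>The three types of primitive Lie algebras\<close>

definition primitive_type1 :: "'v set \<Rightarrow> bool" where
  "primitive_type1 U \<longleftrightarrow> (\<exists>A. socle sc br = A \<and> minimal_ideal sc br A \<and> abelian_set br A \<and>
     centraliser br A = A \<and> ssum U A = UNIV \<and> U \<inter> A = {0})"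

definition primitive_type2 :: "'v set \<Rightarrow> bool" where
  "primitive_type2 U \<longleftrightarrow> (\<exists>A. socle sc br = A \<and> minimal_ideal sc br A \<and> \<not> abelian_set br A \<and>
     ssum U A = UNIV \<and> centraliser br A = {0})"

definition primitive_type3 :: "'v set \<Rightarrow> bool" where
  "primitive_type3 U \<longleftrightarrow> (\<exists>A B. socle sc br = ssum A B \<and> A \<inter> B = {0} \<and>
     minimal_ideal sc br A \<and> minimal_ideal sc br B \<and> A \<noteq> B \<and>
     (\<forall>I. minimal_ideal sc br I \<longrightarrow> I = A \<or> I = B) \<and>
     ssum A U = UNIV \<and> A \<inter> U = {0} \<and>
     ssum B U = UNIV \<and> B \<inter> U = {0} \<and>
     A = centraliser br B \<and> B = centraliser br A \<and>
     \<not> abelian_set br A \<and> \<not> abelian_set br B \<and>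
     \<not> abelian_set br (ssum A B \<inter> U) \<and>
     lie_iso_sets sc br A B \<and>
     lie_iso_sets sc br A (ssum A B \<inter> U) \<and>
     lie_iso_sets sc br B (ssum A B \<inter> U))"

lemma primitive_type3_socle_not_minimal:
  assumes "primitive_type3 U"
  shows "\<not> minimal_ideal sc br (socle sc br)"
proof -
  obtain A B where "socle sc br = ssum A B" "minimal_ideal sc br A" "minimal_ideal sc br B" "A \<noteq> B"
    using assms unfolding primitive_type3_def by (elim exE conjE) (rule that; assumption)
  then show ?thesis
    using socle_minimal_not_pair by blast
qed

lemma minimal_ideal_unique_if_centraliser_subset:
  assumes A: "minimal_ideal sc br A" and CA: "centraliser br A \<subseteq> A"
    and I: "minimal_ideal sc br I"
  shows "I = A"
proof (rule ccontr)
  assume "I \<noteq> A"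
  then have "I \<subseteq> A"
    using minimal_ideal_subset_centraliser[OF A I] CA by blast
  then show False
    using minimal_idealD[OF A minimal_ideal_lie_ideal[OF I]] minimal_ideal_nonzero[OF I] \<open>I \<noteq> A\<close>
    by blast
qed

lemma nonzero_if_superset_nonzero: "lie_ideal sc br A \<Longrightarrow> A \<noteq> {0} \<Longrightarrow> A \<subseteq> C \<Longrightarrow> C \<noteq> {0}"
  using lie_ideal_zero by blast

lemma primitive_type1_if_abelian:
  assumes U: "maximal_subalgebra sc br U" and cf: "core_free sc br U"
    and A: "minimal_ideal sc br A" and ab: "abelian_set br A"
  shows "primitive_type1 U"
proof -
  have Ai: "lie_ideal sc br A" and A0: "A \<noteq> {0}"
    using A minimal_ideal_lie_ideal minimal_ideal_nonzero by auto
  have AC: "A \<subseteq> centraliser br A"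
    using ab subset_centraliser_iff_abelian by blast
  have "minimal_ideal sc br (centraliser br A)"
    using centraliser_nonzero_minimal[OF U cf Ai A0 nonzero_if_superset_nonzero[OF Ai A0 AC]] .
  then have cA: "centraliser br A = A"
    using minimal_idealD[OF _ Ai AC A0] by simp
  have "socle sc br = A"
    using socle_eq_single[OF A minimal_ideal_unique_if_centraliser_subset[OF A]] cA by blast
  then show ?thesis
    unfolding primitive_type1_def
    using A ab cA ssum_core_free_maximal_eq_UNIV[OF U cf Ai A0]
      centraliser_Int_core_free_maximal[OF U cf Ai A0] by blast
qed

lemma primitive_type2_if_centraliser_zero:
  assumes U: "maximal_subalgebra sc br U" and cf: "core_free sc br U"
    and A: "minimal_ideal sc br A" and nab: "\<not> abelian_set br A"
    and C0: "centraliser br A = {0}"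
  shows "primitive_type2 U"
proof -
  have Ai: "lie_ideal sc br A" and A0: "A \<noteq> {0}"
    using A minimal_ideal_lie_ideal minimal_ideal_nonzero by auto
  have "centraliser br A \<subseteq> A"
    using C0 lie_ideal_zero[OF Ai] by simp
  then have "socle sc br = A"
    using socle_eq_single[OF A minimal_ideal_unique_if_centraliser_subset[OF A]] by blast
  then show ?thesis
    unfolding primitive_type2_def
    using A nab C0 ssum_core_free_maximal_eq_UNIV[OF U cf Ai A0] by blast
qed

lemma centraliser_pair:
  assumes U: "maximal_subalgebra sc br U" and cf: "core_free sc br U"
    and A: "minimal_ideal sc br A" and nab: "\<not> abelian_set br A"
    and B_def: "B = centraliser br A" and B0: "B \<noteq> {0}"
  shows "minimal_ideal sc br B" "B \<noteq> A" "A = centraliser br B" "\<not> abelian_set br B"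
    and "\<And>I. minimal_ideal sc br I \<Longrightarrow> I = A \<or> I = B"
proof -
  have Ai: "lie_ideal sc br A" and A0: "A \<noteq> {0}"
    using A minimal_ideal_lie_ideal minimal_ideal_nonzero by auto
  show B: "minimal_ideal sc br B"
    using centraliser_nonzero_minimal[OF U cf Ai A0] B0 by (simp add: B_def)
  then have Bi: "lie_ideal sc br B"
    by (rule minimal_ideal_lie_ideal)
  show BA: "B \<noteq> A"
    using nab subset_centraliser_iff_abelian B_def by blast
  have AC: "A \<subseteq> centraliser br B"
    using minimal_ideal_subset_centraliser[OF B A BA] .
  have "minimal_ideal sc br (centraliser br B)"
    using centraliser_nonzero_minimal[OF U cf Bi B0 nonzero_if_superset_nonzero[OF Ai A0 AC]] .
  then show AB: "A = centraliser br B"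
    using minimal_idealD[OF _ Ai AC A0] by simp
  show "\<not> abelian_set br B"
  proof
    assume "abelian_set br B"
    then have "B \<subseteq> A"
      using AB subset_centraliser_iff_abelian by blast
    then show False
      using minimal_idealD[OF A Bi _ B0] BA by blast
  qed
  show "I = A \<or> I = B" if I: "minimal_ideal sc br I" for I
  proof (rule disjCI)
    assume "I \<noteq> B"
    show "I = A"
    proof (rule ccontr)
      assume "I \<noteq> A"
      then have "I \<subseteq> B"
        using minimal_ideal_subset_centraliser[OF A I] B_def by blast
      then show False
        using minimal_idealD[OF B minimal_ideal_lie_ideal[OF I] _ minimal_ideal_nonzero[OF I]]
          \<open>I \<noteq> B\<close> by blast
    qed
  qed
qed

lemma primitive_type3_if_centraliser_nonzero:
  assumes U: "maximal_subalgebra sc br U" and cf: "core_free sc br U"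
    and A: "minimal_ideal sc br A" and nab: "\<not> abelian_set br A"
    and C0: "centraliser br A \<noteq> {0}"
  shows "primitive_type3 U"
proof -
  define B where "B = centraliser br A"
  have B0: "B \<noteq> {0}"
    using C0 by (simp add: B_def)
  note pair = centraliser_pair[OF U cf A nab B_def B0]
  have Ai: "lie_ideal sc br A" and A0: "A \<noteq> {0}" and Bi: "lie_ideal sc br B"
    using A pair(1) minimal_ideal_lie_ideal minimal_ideal_nonzero by auto
  have Us: "subalgebra sc br U"
    using U by (rule maximal_subalgebra_subalgebra)
  have AB: "A \<inter> B = {0}"
    using minimal_ideals_disjoint[OF A pair(1)] pair(2) by blast
  have AU: "A \<inter> U = {0}"
    using centraliser_Int_core_free_maximal[OF U cf Bi B0] pair(3) by simp
  have BU: "B \<inter> U = {0}"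
    using centraliser_Int_core_free_maximal[OF U cf Ai A0] by (simp add: B_def)
  have SAU: "ssum A U = UNIV"
    using ssum_core_free_maximal_eq_UNIV[OF U cf Ai A0] by (simp add: ssum_commute)
  have SBU: "ssum B U = UNIV"
    using ssum_core_free_maximal_eq_UNIV[OF U cf Bi B0] by (simp add: ssum_commute)
  have commAB: "br a b = 0" if "a \<in> A" "b \<in> B" for a b
    using that pair(3) unfolding centraliser_def by blast
  have commBA: "br b a = 0" if "b \<in> B" "a \<in> A" for a b
    using that unfolding B_def centraliser_def by blast
  have WA: "lie_iso_sets sc br (ssum A B \<inter> U) A"
    using lie_iso_sets_projection[OF Ai Bi AB BU SBU subalgebra_subspace[OF Us] commAB] .
  have "B \<inter> A = {0}"
    using AB by blast
  then have WB: "lie_iso_sets sc br (ssum A B \<inter> U) B"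
    using lie_iso_sets_projection[OF Bi Ai _ AU SAU subalgebra_subspace[OF Us] commBA]
    by (simp add: ssum_commute)
  have W: "subalgebra sc br (ssum A B \<inter> U)"
    using subalgebra_Int[OF ssum_subalgebra[OF lie_ideal_subalgebra[OF Ai] Bi] Us] .
  have AW: "lie_iso_sets sc br A (ssum A B \<inter> U)" and BW: "lie_iso_sets sc br B (ssum A B \<inter> U)"
    using lie_iso_sets_sym[OF W] WA WB by auto
  have "lie_iso_sets sc br A B" "\<not> abelian_set br (ssum A B \<inter> U)"
    using lie_iso_sets_trans[OF AW WB] lie_iso_sets_abelian[OF WA] nab by auto
  then show ?thesis
    unfolding primitive_type3_def
    using socle_eq_pair[OF A pair(1,5)] AB A pair(1,3,4) not_sym[OF pair(2)] SAU AU SBU BU nab B_def AW BW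
    by (intro exI[of _ A] exI[of _ B] conjI allI impI) (assumption | rule pair(5))+
qed

lemma primitive_trichotomy:
  assumes U: "maximal_subalgebra sc br U" and cf: "core_free sc br U"
    and nontriv: "(UNIV :: 'v set) \<noteq> {0}"
  shows "(primitive_type1 U \<and> \<not> primitive_type2 U \<and> \<not> primitive_type3 U) \<or>
         (\<not> primitive_type1 U \<and> primitive_type2 U \<and> \<not> primitive_type3 U) \<or>
         (\<not> primitive_type1 U \<and> \<not> primitive_type2 U \<and> primitive_type3 U)"
proof -
  obtain A where A: "minimal_ideal sc br A"
    using minimal_ideal_exists[OF lie_ideal_UNIV nontriv] by blast
  have "primitive_type1 U \<or> primitive_type2 U \<or> primitive_type3 U"
    using primitive_type1_if_abelian[OF U cf A] primitive_type2_if_centraliser_zero[OF U cf A]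
      primitive_type3_if_centraliser_nonzero[OF U cf A] by blast
  moreover have "\<not> (primitive_type1 U \<and> primitive_type2 U)"
    unfolding primitive_type1_def primitive_type2_def by blast
  moreover have "minimal_ideal sc br (socle sc br)" if "primitive_type1 U \<or> primitive_type2 U"
    using that unfolding primitive_type1_def primitive_type2_def by (elim disjE exE conjE) simp_all
  then have "\<not> (primitive_type3 U \<and> (primitive_type1 U \<or> primitive_type2 U))"
    using primitive_type3_socle_not_minimal by blast
  ultimately show ?thesis
    by blast
qed

lemma primitive_iff_supplemented_by_core_free:
  assumes nontriv: "(UNIV :: 'v set) \<noteq> {0}"
  shows "primitive sc br \<longleftrightarrow>
    (\<exists>M. subalgebra sc br M \<and> core_free sc br M \<and>
         (\<forall>A. minimal_ideal sc br A \<longrightarrow> ssum M A = UNIV))"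
proof
  assume "primitive sc br"
  then obtain U where "maximal_subalgebra sc br U" "core_free sc br U"
    unfolding primitive_def by blast
  then show "\<exists>M. subalgebra sc br M \<and> core_free sc br M \<and>
      (\<forall>A. minimal_ideal sc br A \<longrightarrow> ssum M A = UNIV)"
    using ssum_core_free_maximal_eq_UNIV minimal_ideal_lie_ideal minimal_ideal_nonzero
      maximal_subalgebra_subalgebra by blast
next
  assume "\<exists>M. subalgebra sc br M \<and> core_free sc br M \<and>
      (\<forall>A. minimal_ideal sc br A \<longrightarrow> ssum M A = UNIV)"
  then obtain M where M: "subalgebra sc br M" "core_free sc br M"
    and MA: "\<And>A. minimal_ideal sc br A \<Longrightarrow> ssum M A = UNIV"
    by blast
  have "M \<noteq> UNIV"
    using core_free_lie_ideal_eq_0[OF M(2) lie_ideal_UNIV] nontriv by auto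
  then obtain U where U: "maximal_subalgebra sc br U" "M \<subseteq> U"
    using maximal_subalgebra_exists[OF M(1)] by blast
  have "core_free sc br U"
  proof (rule ccontr)
    assume "\<not> core_free sc br U"
    then obtain I where I: "lie_ideal sc br I" "I \<subseteq> U" "I \<noteq> {0}"
      by (rule not_core_free_obtains_lie_ideal)
    then obtain A where "minimal_ideal sc br A" "A \<subseteq> U"
      by (metis minimal_ideal_exists subset_trans)
    then have "ssum M A \<subseteq> U"
      using ssum_subset[OF subalgebra_subspace[OF maximal_subalgebra_subalgebra[OF U(1)]]] U(2)
      by blast
    then show False
      using MA \<open>minimal_ideal sc br A\<close> U(1) by (auto simp: maximal_subalgebra_def)
  qed
  then show "primitive sc br"
    unfolding primitive_def using U(1) by blast
qed

end

theorem theorem1p1: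
  fixes sc :: "'f::field \<Rightarrow> 'v::ab_group_add \<Rightarrow> 'v"
    and br :: "'v \<Rightarrow> 'v \<Rightarrow> 'v"
  assumes lie: "lie_algebra sc br"
    and fd: "fin_dim sc"
    and nontriv: "(UNIV :: 'v set) \<noteq> {0}"
  shows
   "(primitive sc br \<longleftrightarrow>
       (\<exists>M. subalgebra sc br M \<and> core_free sc br M \<and>
            (\<forall>A. minimal_ideal sc br A \<longrightarrow> ssum M A = UNIV)))
   \<and> (\<forall>U A. primitive sc br \<and> maximal_subalgebra sc br U \<and> core_free sc br U
          \<and> lie_ideal sc br A \<and> A \<noteq> {0} \<longrightarrow>
          centraliser br A \<inter> U = {0} \<and>
          (centraliser br A = {0} \<or> minimal_ideal sc br (centraliser br A)))
   \<and> (\<forall>U. primitive sc br \<and> maximal_subalgebra sc br U \<and> core_free sc br U \<longrightarrow>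
       (let
          Pa = (\<exists>A. socle sc br = A \<and> minimal_ideal sc br A \<and> abelian_set br A \<and>
                   centraliser br A = A \<and> ssum U A = UNIV \<and> U \<inter> A = {0});
          Pb = (\<exists>A. socle sc br = A \<and> minimal_ideal sc br A \<and> \<not> abelian_set br A \<and>
                   ssum U A = UNIV \<and> centraliser br A = {0});
          Pc = (\<exists>A B. socle sc br = ssum A B \<and> A \<inter> B = {0} \<and>
                   minimal_ideal sc br A \<and> minimal_ideal sc br B \<and> A \<noteq> B \<and>
                   (\<forall>I. minimal_ideal sc br I \<longrightarrow> I = A \<or> I = B) \<and>
                   ssum A U = UNIV \<and> A \<inter> U = {0} \<and>
                   ssum B U = UNIV \<and> B \<inter> U = {0} \<and>
                   A = centraliser br B \<and> B = centraliser br A \<and>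
                   \<not> abelian_set br A \<and> \<not> abelian_set br B \<and>
                   \<not> abelian_set br (ssum A B \<inter> U) \<and>
                   lie_iso_sets sc br A B \<and>
                   lie_iso_sets sc br A (ssum A B \<inter> U) \<and>
                   lie_iso_sets sc br B (ssum A B \<inter> U))
        in (Pa \<and> \<not> Pb \<and> \<not> Pc) \<or> (\<not> Pa \<and> Pb \<and> \<not> Pc) \<or> (\<not> Pa \<and> \<not> Pb \<and> Pc)))"
proof -
  interpret finite_dimensional_lie_algebra sc br
    using lie fd by unfold_locales
  show ?thesis
    unfolding Let_def
      primitive_type1_def[symmetric] primitive_type2_def[symmetric] primitive_type3_def[symmetric]
  proof (intro conjI allI impI)
    show "primitive sc br \<longleftrightarrow> (\<exists>M. subalgebra sc br M \<and> core_free sc br M \<and>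
        (\<forall>A. minimal_ideal sc br A \<longrightarrow> ssum M A = UNIV))"
      by (rule primitive_iff_supplemented_by_core_free[OF nontriv])
  next
    fix U A
    assume "primitive sc br \<and> maximal_subalgebra sc br U \<and> core_free sc br U
      \<and> lie_ideal sc br A \<and> A \<noteq> {0}"
    then show "centraliser br A \<inter> U = {0}"
      and "centraliser br A = {0} \<or> minimal_ideal sc br (centraliser br A)"
      using centraliser_Int_core_free_maximal centraliser_zero_or_minimal by blast+
  next
    fix U
    assume "primitive sc br \<and> maximal_subalgebra sc br U \<and> core_free sc br U"
    then show "(primitive_type1 U \<and> \<not> primitive_type2 U \<and> \<not> primitive_type3 U) \<or>
        (\<not> primitive_type1 U \<and> primitive_type2 U \<and> \<not> primitive_type3 U) \<or>
        (\<not> primitive_type1 U \<and> \<not> primitive_type2 U \<and> primitive_type3 U)"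
      using primitive_trichotomy[OF _ _ nontriv] by blast
  qed
qed

end
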